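(* Let $g\in C^1([0,\infty))$ satisfy $g_0\le \frac{t g'(t)}{g(t)}\le g_1$ for all $t>0$, for constants $1\le g_0\le g_1$, and suppose that for some $p>2$ and $c>0$, $\big(\frac{g(|\xi|)}{|\xi|}\xi-\frac{g(|\zeta|)}{|\zeta|}\zeta\big)\cdot(\xi-\zeta)\ge c|\xi-\zeta|^p$ for all $\xi,\zeta\in\mathbb{R}^d$. Let $G(t)=\int_0^tg(s)\,\mathrm{d}s$, and let $C_0>0$, $\alpha\in(0,1)$ be the constants of the decay property described in the context. Let $B_R$ be a ball, $w\in W^{1,G}(B_R)$, and let $h\in W^{1,G}(B_R)$ be a weak solution of $\operatorname{div}\big(\frac{g(|Dh|)}{|Dh|}Dh\big)=0$ in $B_R$. Then there exists $C>0$ such that for every $0<r\le R$, with $B_r$ the ball concentric to $B_R$ of radius $r$, $$\int_{B_r}|Dw-(Dw)_r|\,\mathrm{d}x\le C\Big(\frac{r}{R}\Big)^{d+\alpha}\int_{B_R}|Dw-(Dw)_R|\,\mathrm{d}x+C\int_{B_R}|Dw-Dh|\,\mathrm{d}x.$$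
   Context: $W^{1,G}(U)$ denotes the set of $u\in W^{1,1}(U)$ with $\int_U G(|u|)+\int_U G(|Du|)<\infty$. For a ball $B_\rho$, $(F)_\rho$ denotes the average of $F$ over $B_\rho$. Decay property (a result of Baroni used by the paper): there exist $C_0>0$ and $\alpha\in(0,1)$ such that for every ball $B_R$ and every weak solution $h\in W^{1,G}(B_R)$ of $\operatorname{div}\big(\frac{g(|Dh|)}{|Dh|}Dh\big)=0$ in $B_R$, and every $r\in(0,R]$, $\int_{B_r}|Dh-(Dh)_r|\,\mathrm{d}x\le C_0\big(\frac{r}{R}\big)^{d+\alpha}\int_{B_R}|Dh-(Dh)_R|\,\mathrm{d}x$ (concentric balls). The exponent $\alpha$ in the claim is this one. *)

theory Defs
  imports "HOL-Analysis.Analysis"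
begin

fun Ck :: "nat \<Rightarrow> ('a::euclidean_space \<Rightarrow> real) set" where
  "Ck 0 = {f. continuous_on UNIV f}"
| "Ck (Suc k) = {f. (\<forall>x. f differentiable (at x)) \<and>
      (\<forall>i\<in>Basis. (\<lambda>x. frechet_derivative f (at x) i) \<in> Ck k)}"

definition smooth_fun :: "('a::euclidean_space \<Rightarrow> real) \<Rightarrow> bool" where
  "smooth_fun f \<longleftrightarrow> (\<forall>k. f \<in> Ck k)"

definition test_fun :: "'a::euclidean_space set \<Rightarrow> ('a \<Rightarrow> real) \<Rightarrow> bool" where
  "test_fun U \<phi> \<longleftrightarrow> smooth_fun \<phi> \<and> compact (closure {x. \<phi> x \<noteq> 0})
      \<and> closure {x. \<phi> x \<noteq> 0} \<subseteq> U"

definition grad :: "('a::euclidean_space \<Rightarrow> real) \<Rightarrow> 'a \<Rightarrow> 'a" where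
  "grad \<phi> x = (\<Sum>i\<in>Basis. frechet_derivative \<phi> (at x) i *\<^sub>R i)"

definition weak_grad :: "'a::euclidean_space set \<Rightarrow> ('a \<Rightarrow> real) \<Rightarrow> ('a \<Rightarrow> 'a) \<Rightarrow> bool" where
  "weak_grad U u Du \<longleftrightarrow>
     (\<forall>K. compact K \<and> K \<subseteq> U \<longrightarrow> set_integrable lborel K u \<and> set_integrable lborel K Du) \<and>
     (\<forall>\<phi>. test_fun U \<phi> \<longrightarrow> (\<forall>i\<in>Basis.
        (\<integral>x\<in>U. u x * frechet_derivative \<phi> (at x) i \<partial>lborel)
          = - (\<integral>x\<in>U. (Du x \<bullet> i) * \<phi> x \<partial>lborel)))"

definition W11 :: "'a::euclidean_space set \<Rightarrow> ('a \<Rightarrow> real) \<Rightarrow> ('a \<Rightarrow> 'a) \<Rightarrow> bool" where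
  "W11 U u Du \<longleftrightarrow> set_integrable lborel U u \<and> set_integrable lborel U Du \<and> weak_grad U u Du"

definition W1G :: "(real \<Rightarrow> real) \<Rightarrow> 'a::euclidean_space set \<Rightarrow> ('a \<Rightarrow> real) \<Rightarrow> ('a \<Rightarrow> 'a) \<Rightarrow> bool" where
  "W1G G U u Du \<longleftrightarrow> W11 U u Du \<and>
     set_integrable lborel U (\<lambda>x. G \<bar>u x\<bar>) \<and> set_integrable lborel U (\<lambda>x. G (norm (Du x)))"

definition weak_sol :: "(real \<Rightarrow> real) \<Rightarrow> (real \<Rightarrow> real) \<Rightarrow> 'a::euclidean_space set
    \<Rightarrow> ('a \<Rightarrow> real) \<Rightarrow> ('a \<Rightarrow> 'a) \<Rightarrow> bool" where
  "weak_sol g G U h Dh \<longleftrightarrow> W1G G U h Dh \<and>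
     (\<forall>\<phi>. test_fun U \<phi> \<longrightarrow>
        (\<integral>x\<in>U. ((g (norm (Dh x)) / norm (Dh x)) *\<^sub>R Dh x) \<bullet> grad \<phi> x \<partial>lborel) = 0)"

definition avg :: "'a::euclidean_space set \<Rightarrow> ('a \<Rightarrow> 'a) \<Rightarrow> 'a" where
  "avg U F = (1 / measure lborel U) *\<^sub>R (\<integral>x\<in>U. F x \<partial>lborel)"

definition osc :: "'a::euclidean_space set \<Rightarrow> ('a \<Rightarrow> 'a) \<Rightarrow> real" where
  "osc U F = (\<integral>x\<in>U. norm (F x - avg U F) \<partial>lborel)"

end

theory Submission
  imports Defs
begin

text \<open>Compare \<open>Dw\<close> with the gradient \<open>Dh\<close> of the solution: the oscillation is stable under
  perturbation, \<open>osc U F \<le> osc U H + 2 \<integral>\<^sub>U |F - H|\<close>, so the decay estimate for \<open>Dh\<close>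
  transfers to \<open>Dw\<close> up to twice the comparison error on the small ball and on the large ball.\<close>

lemma set_integrable_const:
  fixes c :: "'b::{banach, second_countable_topology}"
  assumes "A \<in> sets M" "emeasure M A \<noteq> \<infinity>"
  shows "set_integrable M A (\<lambda>_. c)"
  unfolding set_integrable_def
  using assms by (intro integrable_scaleR_left integrable_real_indicator) (auto simp: less_top)

lemma set_integral_nonneg:
  fixes f :: "'a \<Rightarrow> real"
  assumes "\<And>x. x \<in> A \<Longrightarrow> 0 \<le> f x"
  shows "0 \<le> (\<integral>x\<in>A. f x \<partial>M)"
  unfolding set_lebesgue_integral_def
  using assms by (intro integral_nonneg_AE) (auto simp: indicator_def)

lemma set_integral_mono_set:
  fixes f :: "'a \<Rightarrow> real"
  assumes f: "set_integrable M B f" and A: "A \<in> sets M" and "A \<subseteq> B"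
    and nonneg: "\<And>x. x \<in> B \<Longrightarrow> 0 \<le> f x"
  shows "(\<integral>x\<in>A. f x \<partial>M) \<le> (\<integral>x\<in>B. f x \<partial>M)"
proof -
  have "set_integrable M A f"
    using set_integrable_subset[OF f A \<open>A \<subseteq> B\<close>] .
  then show ?thesis
    unfolding set_lebesgue_integral_def
    using f \<open>A \<subseteq> B\<close> nonneg unfolding set_integrable_def
    by (intro integral_mono) (auto simp: indicator_def)
qed

lemma osc_nonneg: "0 \<le> osc U F"
  unfolding osc_def by (rule set_integral_nonneg) simp

lemma measure_mult_norm_avg_diff_le:
  fixes F H :: "'a::euclidean_space \<Rightarrow> 'a"
  assumes F: "set_integrable lborel U F" and H: "set_integrable lborel U H"
  shows "measure lborel U * norm (avg U F - avg U H) \<le> (\<integral>x\<in>U. norm (F x - H x) \<partial>lborel)"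
proof (cases "measure lborel U = 0")
  case True
  then show ?thesis by (simp add: set_integral_nonneg)
next
  case False
  have "avg U F - avg U H = (1 / measure lborel U) *\<^sub>R (\<integral>x\<in>U. F x - H x \<partial>lborel)"
    unfolding avg_def using set_integral_diff(2)[OF F H] by (simp add: scaleR_diff_right)
  then have "measure lborel U * norm (avg U F - avg U H) = norm (\<integral>x\<in>U. F x - H x \<partial>lborel)"
    using False by simp
  also have "\<dots> \<le> (\<integral>x\<in>U. norm (F x - H x) \<partial>lborel)"
    using F H by (intro set_integral_norm_bound) auto
  finally show ?thesis .
qed

lemma osc_le_osc_add:
  fixes F H :: "'a::euclidean_space \<Rightarrow> 'a"
  assumes U: "U \<in> sets lborel" "emeasure lborel U \<noteq> \<infinity>"
    and F: "set_integrable lborel U F" and H: "set_integrable lborel U H"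
  shows "osc U F \<le> osc U H + 2 * (\<integral>x\<in>U. norm (F x - H x) \<partial>lborel)"
proof -
  let ?I = "\<integral>x\<in>U. norm (F x - H x) \<partial>lborel"
  let ?d = "norm (avg U F - avg U H)"
  have int_diff: "set_integrable lborel U (\<lambda>x. norm (F x - H x))"
    using F H by (intro set_integrable_norm) auto
  have int_oscH: "set_integrable lborel U (\<lambda>x. norm (H x - avg U H))"
    using set_integral_diff(1)[OF H set_integrable_const[OF U]] by (rule set_integrable_norm)
  have int_oscF: "set_integrable lborel U (\<lambda>x. norm (F x - avg U F))"
    using set_integral_diff(1)[OF F set_integrable_const[OF U]] by (rule set_integrable_norm)
  have int_d: "set_integrable lborel U (\<lambda>_. ?d)"
    using set_integrable_const[OF U] .
  have pointwise: "norm (F x - avg U F) \<le> norm (F x - H x) + norm (H x - avg U H) + ?d" for x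
    using norm_triangle_ineq4[of "(F x - H x) + (H x - avg U H)" "avg U F - avg U H"]
      norm_triangle_ineq[of "F x - H x" "H x - avg U H"]
    by (simp add: algebra_simps)
  have "osc U F \<le> (\<integral>x\<in>U. norm (F x - H x) + norm (H x - avg U H) + ?d \<partial>lborel)"
    unfolding osc_def using int_oscF int_diff int_oscH int_d pointwise
    by (intro set_integral_mono) auto
  also have "\<dots> = ?I + osc U H + measure lborel U * ?d"
    unfolding osc_def using int_diff int_oscH int_d set_integral_const[OF U, of ?d] by simp
  also have "\<dots> \<le> osc U H + 2 * ?I"
    using measure_mult_norm_avg_diff_le[OF F H] by simp
  finally show ?thesis .
qed

lemma osc_comparison:
  fixes F H :: "'a::euclidean_space \<Rightarrow> 'a"
  assumes U: "U \<in> sets lborel" "emeasure lborel U \<noteq> \<infinity>"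
    and V: "V \<in> sets lborel" "V \<subseteq> U"
    and F: "set_integrable lborel U F" and H: "set_integrable lborel U H"
    and decay: "osc V H \<le> K * osc U H" and "0 \<le> K"
  shows "osc V F \<le> K * osc U F + (2 * K + 2) * (\<integral>x\<in>U. norm (F x - H x) \<partial>lborel)"
proof -
  let ?I = "\<integral>x\<in>U. norm (F x - H x) \<partial>lborel"
  have V_finite: "emeasure lborel V \<noteq> \<infinity>"
    using emeasure_mono[OF \<open>V \<subseteq> U\<close> U(1)] U(2) by (auto simp: top_unique)
  have "(\<integral>x\<in>V. norm (F x - H x) \<partial>lborel) \<le> ?I"
    using F H V by (intro set_integral_mono_set set_integrable_norm) auto
  moreover have "osc V F \<le> osc V H + 2 * (\<integral>x\<in>V. norm (F x - H x) \<partial>lborel)"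
    using F H V V_finite
    by (intro osc_le_osc_add set_integrable_subset[OF F] set_integrable_subset[OF H]) auto
  moreover have "osc U H \<le> osc U F + 2 * ?I"
    using osc_le_osc_add[OF U H F] by (simp add: norm_minus_commute)
  then have "K * osc U H \<le> K * (osc U F + 2 * ?I)"
    using \<open>0 \<le> K\<close> by (rule mult_left_mono)
  ultimately show ?thesis
    using decay by (simp add: algebra_simps)
qed

theorem proposition4p3:
  fixes g g' G :: "real \<Rightarrow> real"
    and g0 g1 p c C0 \<alpha> R :: real
    and x0 :: "'a::euclidean_space"
    and w h :: "'a \<Rightarrow> real" and Dw Dh :: "'a \<Rightarrow> 'a"
  assumes g_deriv: "\<And>t. t \<ge> 0 \<Longrightarrow> (g has_real_derivative g' t) (at t within {0..})"
    and g'_cont: "continuous_on {0..} g'"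
    and g01: "1 \<le> g0" "g0 \<le> g1"
    and g_ratio: "\<And>t. t > 0 \<Longrightarrow> g0 \<le> t * g' t / g t \<and> t * g' t / g t \<le> g1"
    and p: "p > 2" and c: "c > 0"
    and mono: "\<And>\<xi> \<zeta> :: 'a.
       ((g (norm \<xi>) / norm \<xi>) *\<^sub>R \<xi> - (g (norm \<zeta>) / norm \<zeta>) *\<^sub>R \<zeta>) \<bullet> (\<xi> - \<zeta>)
         \<ge> c * norm (\<xi> - \<zeta>) powr p"
    and G_def: "\<And>t. t \<ge> 0 \<Longrightarrow> G t = integral {0..t} g"
    and C0: "C0 > 0" and \<alpha>: "0 < \<alpha>" "\<alpha> < 1"
    and decay: "\<And>(y0::'a) \<rho> v Dv r. 0 < \<rho> \<Longrightarrow> weak_sol g G (ball y0 \<rho>) v Dv \<Longrightarrow>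
       0 < r \<Longrightarrow> r \<le> \<rho> \<Longrightarrow>
       osc (ball y0 r) Dv \<le> C0 * (r / \<rho>) powr (real DIM('a) + \<alpha>) * osc (ball y0 \<rho>) Dv"
    and R: "R > 0"
    and w: "W1G G (ball x0 R) w Dw"
    and h: "weak_sol g G (ball x0 R) h Dh"
  shows "\<exists>C>0. \<forall>r. 0 < r \<and> r \<le> R \<longrightarrow>
     osc (ball x0 r) Dw \<le> C * (r / R) powr (real DIM('a) + \<alpha>) * osc (ball x0 R) Dw
        + C * (\<integral>x\<in>ball x0 R. norm (Dw x - Dh x) \<partial>lborel)"
proof (intro exI[of _ "2 * C0 + 2"] conjI allI impI)
  fix r assume r: "0 < r \<and> r \<le> R"
  let ?q = "(r / R) powr (real DIM('a) + \<alpha>)"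
  let ?I = "\<integral>x\<in>ball x0 R. norm (Dw x - Dh x) \<partial>lborel"
  have "?q \<le> 1"
    using r R \<alpha> by (intro powr_le1) auto
  have I_nonneg: "0 \<le> ?I"
    by (simp add: set_integral_nonneg)
  have "C0 * ?q * osc (ball x0 R) Dw \<le> (2 * C0 + 2) * ?q * osc (ball x0 R) Dw"
    using C0 by (intro mult_right_mono osc_nonneg) auto
  moreover have "(2 * (C0 * ?q) + 2) * ?I \<le> (2 * C0 + 2) * ?I"
    using C0 \<open>?q \<le> 1\<close> by (intro mult_right_mono I_nonneg) simp
  moreover have "osc (ball x0 r) Dw \<le> C0 * ?q * osc (ball x0 R) Dw + (2 * (C0 * ?q) + 2) * ?I"
    using w h decay[OF R h] r C0 emeasure_lborel_ball_finite[of x0 R]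
    by (intro osc_comparison) (auto simp: W1G_def W11_def weak_sol_def)
  ultimately show "osc (ball x0 r) Dw \<le> (2 * C0 + 2) * ?q * osc (ball x0 R) Dw + (2 * C0 + 2) * ?I"
    by linarith
qed (use C0 in simp)

end
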